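(* Let $\mathcal T$ be a locally finite tessellation of ${\mathbb X}$ and $x\in{\mathbb X}$. Let $C=\bigcap_{T\in\mathcal T,\,x\in T}T$. Then $C$ is a cell of $\mathcal T$ and $x\in C^r$.
   Context: ${\mathbb X}$ is $\mathbb R^n$, the unit sphere $\mathbb S^n$, or hyperbolic $n$-space. A hyperplane is a complete totally geodesic submanifold of codimension 1; closed half-spaces are the closures of the two components of its complement. A polyhedron is a nonempty intersection of a family of closed half-spaces whose boundary hyperplanes form a locally finite family; its relative interior $C^r$ is its interior in the smallest complete totally geodesic submanifold containing it; it is thick if it has nonempty interior in ${\mathbb X}$. A tessellation is a set of thick polyhedra (tiles) covering ${\mathbb X}$ with pairwise disjoint interiors; locally finite means every compact set meets only finitely many tiles. A cell of $\mathcal T$ is a nonempty intersection $C$ of tiles such that for every tile $T$ either $C\subseteq T$ or $C^r\cap T=\emptyset$. *)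

theory Defs
  imports "HOL-Analysis.Analysis"
begin

text \<open>The three model spaces, realised inside an ambient Euclidean space 'a.
  Euc: X = 'a itself (n = DIM('a)).
  Sph: X = unit sphere of 'a (n = DIM('a) - 1).
  Hyp: X = hyperboloid model in 'a with Lorentzian form whose time direction is a
       fixed basis vector (n = DIM('a) - 1).\<close>

datatype geom = Euc | Sph | Hyp

definition time_vec :: "'a::euclidean_space" where
  "time_vec = (SOME b. b \<in> Basis)"

definition lorentz :: "'a::euclidean_space \<Rightarrow> 'a \<Rightarrow> real" where
  "lorentz x y = x \<bullet> y - 2 * (x \<bullet> time_vec) * (y \<bullet> time_vec)"

definition space :: "geom \<Rightarrow> 'a::euclidean_space set" where
  "space k = (case k of
      Euc \<Rightarrow> UNIV
    | Sph \<Rightarrow> sphere 0 1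
    | Hyp \<Rightarrow> {x. lorentz x x = -1 \<and> x \<bullet> time_vec > 0})"

text \<open>Ambient sets cutting out the complete totally geodesic submanifolds:
  affine subspaces (Euclidean case) or linear subspaces (spherical/hyperbolic case).\<close>
definition ambient_flat :: "geom \<Rightarrow> 'a::euclidean_space set \<Rightarrow> bool" where
  "ambient_flat k A = (if k = Euc then affine A else subspace A)"

definition planes :: "geom \<Rightarrow> 'a::euclidean_space set set" where
  "planes k = {space k \<inter> A | A. ambient_flat k A \<and> space k \<inter> A \<noteq> {}}"

definition hyperplanes :: "geom \<Rightarrow> 'a::euclidean_space set set" where
  "hyperplanes k = {space k \<inter> A | A. ambient_flat k A \<and> aff_dim A = int DIM('a) - 1
                                     \<and> space k \<inter> A \<noteq> {}}"

definition halfspaces :: "geom \<Rightarrow> 'a::euclidean_space set \<Rightarrow> 'a set set" where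
  "halfspaces k H = {space k \<inter> closure S | S. S \<in> components (space k - H)}"

definition locally_finite_fam :: "geom \<Rightarrow> 'a::euclidean_space set set \<Rightarrow> bool" where
  "locally_finite_fam k F =
     (\<forall>x\<in>space k. \<exists>e>0. finite {H \<in> F. H \<inter> ball x e \<noteq> {}})"

definition polyhedron :: "geom \<Rightarrow> 'a::euclidean_space set \<Rightarrow> bool" where
  "polyhedron k P =
     (P \<noteq> {} \<and> (\<exists>\<H> F. \<H> \<subseteq> hyperplanes k \<and> locally_finite_fam k \<H>
        \<and> (\<forall>S\<in>F. \<exists>H\<in>\<H>. S \<in> halfspaces k H)
        \<and> P = space k \<inter> \<Inter>F))"

definition plane_hull :: "geom \<Rightarrow> 'a::euclidean_space set \<Rightarrow> 'a set" where
  "plane_hull k C = \<Inter>{P \<in> planes k. C \<subseteq> P}"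

definition rel_int :: "geom \<Rightarrow> 'a::euclidean_space set \<Rightarrow> 'a set" where
  "rel_int k C = {x \<in> C. \<exists>e>0. ball x e \<inter> plane_hull k C \<subseteq> C}"

definition int_X :: "geom \<Rightarrow> 'a::euclidean_space set \<Rightarrow> 'a set" where
  "int_X k C = {x \<in> C. \<exists>e>0. ball x e \<inter> space k \<subseteq> C}"

definition thick :: "geom \<Rightarrow> 'a::euclidean_space set \<Rightarrow> bool" where
  "thick k P = (int_X k P \<noteq> {})"

definition tessellation :: "geom \<Rightarrow> 'a::euclidean_space set set \<Rightarrow> bool" where
  "tessellation k \<T> =
     ((\<forall>T\<in>\<T>. polyhedron k T \<and> thick k T)
      \<and> \<Union>\<T> = space k
      \<and> (\<forall>T1\<in>\<T>. \<forall>T2\<in>\<T>. T1 \<noteq> T2 \<longrightarrow> int_X k T1 \<inter> int_X k T2 = {}))"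

definition locally_finite_tess :: "geom \<Rightarrow> 'a::euclidean_space set set \<Rightarrow> bool" where
  "locally_finite_tess k \<T> =
     (tessellation k \<T> \<and>
      (\<forall>K. compact K \<and> K \<subseteq> space k \<longrightarrow> finite {T \<in> \<T>. T \<inter> K \<noteq> {}}))"

definition cell :: "geom \<Rightarrow> 'a::euclidean_space set set \<Rightarrow> 'a set \<Rightarrow> bool" where
  "cell k \<T> C =
     (C \<noteq> {} \<and> (\<exists>\<S>. \<S> \<noteq> {} \<and> \<S> \<subseteq> \<T> \<and> C = \<Inter>\<S>)
      \<and> (\<forall>T\<in>\<T>. C \<subseteq> T \<or> rel_int k C \<inter> T = {}))"

end

theory Submission
  imports Defs
begin

text \<open>Each tile T is the trace on X of a closed convex set \<open>ambient_hull k T\<close> of the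
  ambient space, which is a cone with apex 0 in the spherical and hyperbolic models, and
  radial projection from 0 identifies interiors in X with interiors of these lifts. Near x
  only the finitely many tiles through x occur, so their lifts cover a neighbourhood of x.
  Tiles have disjoint interiors, so no two lifts share a nonempty open set; by convexity this
  forbids a lift through a point y lying strictly between a point q common to the lifts of
  tiles through x and a point p covered by them near x. Applied with y = x it shows that
  every segment in the intersection D of the lifts through x extends beyond x, i.e. x lies
  in the relative interior of D and hence of the cell; applied with p = x and y a relative
  interior point of the cell it shows that tiles missing x avoid that relative interior.\<close>

lemma time_vec_Basis: "(time_vec::'a::euclidean_space) \<in> Basis"
  unfolding time_vec_def using nonempty_Basis by (metis ex_in_conv someI_ex)

lemma time_vec_unit [simp]: "(time_vec::'a::euclidean_space) \<bullet> time_vec = 1"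
  by (simp add: inner_Basis[OF time_vec_Basis time_vec_Basis])

lemma lorentz_scaleR: "lorentz (c *\<^sub>R w) (c *\<^sub>R w) = c\<^sup>2 * lorentz w w"
  unfolding lorentz_def by (simp add: power2_eq_square algebra_simps)

lemma continuous_on_lorentz [continuous_intros]:
  "continuous_on S (\<lambda>w. lorentz (w::'a::euclidean_space) w)"
  unfolding lorentz_def by (intro continuous_intros)

lemma lorentz_eq_norm_diff:
  fixes w :: "'a::euclidean_space"
  shows "lorentz w w = (norm (w - (w \<bullet> time_vec) *\<^sub>R time_vec))\<^sup>2 - (w \<bullet> time_vec)\<^sup>2"
proof -
  have "(norm (w - (w \<bullet> time_vec) *\<^sub>R time_vec))\<^sup>2
      = (w - (w \<bullet> time_vec) *\<^sub>R time_vec) \<bullet> (w - (w \<bullet> time_vec) *\<^sub>R time_vec)"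
    by (simp add: power2_norm_eq_inner)
  also have "\<dots> = w \<bullet> w - (w \<bullet> time_vec)\<^sup>2"
    by (simp add: inner_diff_left inner_diff_right inner_commute power2_eq_square)
  finally show ?thesis unfolding lorentz_def by (simp add: power2_eq_square)
qed

lemma future_cone_iff:
  fixes w :: "'a::euclidean_space"
  shows "w \<bullet> time_vec > 0 \<and> lorentz w w < 0 \<longleftrightarrow> norm (w - (w \<bullet> time_vec) *\<^sub>R time_vec) < w \<bullet> time_vec"
proof -
  have "(norm (w - (w \<bullet> time_vec) *\<^sub>R time_vec))\<^sup>2 < (w \<bullet> time_vec)\<^sup>2 \<and> w \<bullet> time_vec > 0
     \<longleftrightarrow> norm (w - (w \<bullet> time_vec) *\<^sub>R time_vec) < w \<bullet> time_vec"
    by (smt (verit) norm_ge_zero power2_less_imp_less power_strict_mono zero_less_numeral)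
  then show ?thesis by (auto simp: lorentz_eq_norm_diff)
qed

lemma convex_future_cone: "convex {w::'a::euclidean_space. w \<bullet> time_vec > 0 \<and> lorentz w w < 0}"
proof -
  let ?f = "\<lambda>w::'a. w - (w \<bullet> time_vec) *\<^sub>R time_vec"
  have lin: "?f (u *\<^sub>R a + v *\<^sub>R b) = u *\<^sub>R ?f a + v *\<^sub>R ?f b" for u v a b
    by (simp add: inner_add_left algebra_simps)
  show ?thesis unfolding future_cone_iff convex_def
  proof clarsimp
    fix a b :: 'a and u v :: real
    assume a: "norm (?f a) < a \<bullet> time_vec" and b: "norm (?f b) < b \<bullet> time_vec"
      and u: "0 \<le> u" and v: "0 \<le> v" and uv: "u + v = 1"
    have "norm (?f (u *\<^sub>R a + v *\<^sub>R b)) \<le> u * norm (?f a) + v * norm (?f b)"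
      unfolding lin using u v norm_triangle_ineq[of "u *\<^sub>R ?f a" "v *\<^sub>R ?f b"] by simp
    also have "\<dots> < u * (a \<bullet> time_vec) + v * (b \<bullet> time_vec)"
    proof (cases "u = 0")
      case False
      then show ?thesis
        using a b u v mult_left_mono[of "norm (?f b)" "b \<bullet> time_vec" v]
          mult_strict_left_mono[of "norm (?f a)" "a \<bullet> time_vec" u]
        by linarith
    qed (use uv b in simp)
    finally show "norm (?f (u *\<^sub>R a + v *\<^sub>R b)) < (u *\<^sub>R a + v *\<^sub>R b) \<bullet> time_vec"
      by (simp add: inner_add_left)
  qed
qed

lemma closed_space: "closed (space k :: 'a::euclidean_space set)"
proof (cases k)
  case Hyp
  have "w \<bullet> time_vec \<noteq> 0" if "lorentz w w = -1" for w :: 'a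
  proof
    assume "w \<bullet> time_vec = 0"
    then have "lorentz w w \<ge> 0" using lorentz_eq_norm_diff[of w] by simp
    with that show False by simp
  qed
  then have "space k = {w::'a. lorentz w w = -1} \<inter> {w. w \<bullet> time_vec \<ge> 0}"
    using Hyp by (force simp: space_def)
  moreover have "closed \<dots>"
    by (intro closed_Int closed_Collect_eq closed_Collect_le continuous_intros)
  ultimately show ?thesis by simp
qed (auto simp: space_def)

text \<open>Radial projection along rays from 0 retracts the open cone \<open>model_cone k\<close> onto X.\<close>

definition model_cone :: "geom \<Rightarrow> 'a::euclidean_space set" where
  "model_cone k = (case k of Euc \<Rightarrow> UNIV | Sph \<Rightarrow> - {0}
     | Hyp \<Rightarrow> {w. w \<bullet> time_vec > 0 \<and> lorentz w w < 0})"

definition radial_factor :: "geom \<Rightarrow> 'a::euclidean_space \<Rightarrow> real" where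
  "radial_factor k w =
     (case k of Euc \<Rightarrow> 1 | Sph \<Rightarrow> 1 / norm w | Hyp \<Rightarrow> 1 / sqrt (- lorentz w w))"

definition radial_proj :: "geom \<Rightarrow> 'a::euclidean_space \<Rightarrow> 'a" where
  "radial_proj k w = radial_factor k w *\<^sub>R w"

lemma open_model_cone: "open (model_cone k)"
proof (cases k)
  case Hyp
  have "open ({w::'a. w \<bullet> time_vec > 0} \<inter> {w. lorentz w w < 0})"
    by (intro open_Int open_Collect_less continuous_intros)
  then show ?thesis using Hyp by (simp add: model_cone_def Collect_conj_eq)
qed (auto simp: model_cone_def)

lemma space_subset_model_cone: "space k \<subseteq> model_cone k"
  by (cases k) (auto simp: space_def model_cone_def)

lemma radial_factor_pos: "w \<in> model_cone k \<Longrightarrow> radial_factor k w > 0"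
  by (cases k) (auto simp: model_cone_def radial_factor_def)

lemma radial_proj_in_space: "w \<in> model_cone k \<Longrightarrow> radial_proj k w \<in> space k"
proof (cases k)
  case Hyp
  assume "w \<in> model_cone k"
  then have "lorentz w w < 0" "w \<bullet> time_vec > 0" using Hyp by (auto simp: model_cone_def)
  then show ?thesis
    using Hyp by (simp add: space_def radial_proj_def radial_factor_def lorentz_scaleR power_divide)
qed (auto simp: model_cone_def radial_proj_def radial_factor_def space_def)

lemma radial_proj_space: "z \<in> space k \<Longrightarrow> radial_proj k z = z"
  by (cases k) (auto simp: space_def radial_proj_def radial_factor_def)

lemma continuous_on_radial_proj: "continuous_on (model_cone k) (radial_proj k)"
  by (cases k) (auto simp: radial_proj_def radial_factor_def model_cone_def
      intro!: continuous_intros)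

lemma radial_proj_near:
  assumes "x \<in> space k" "e > 0"
  obtains d where "d > 0" "ball x d \<subseteq> model_cone k" "radial_proj k ` ball x d \<subseteq> ball x e"
proof -
  have x: "x \<in> model_cone k" using assms space_subset_model_cone by blast
  obtain d1 where d1: "d1 > 0"
    "\<forall>w\<in>model_cone k. dist w x < d1 \<longrightarrow> dist (radial_proj k w) (radial_proj k x) < e"
    using continuous_on_radial_proj[of k] x assms(2) unfolding continuous_on_iff by meson
  obtain d2 where d2: "d2 > 0" "ball x d2 \<subseteq> model_cone k"
    using open_model_cone x open_contains_ball_eq by blast
  show ?thesis
    by (rule that[of "min d1 d2"])
      (use d1 d2 radial_proj_space[OF assms(1)] in \<open>auto simp: dist_commute subset_iff\<close>)
qed

definition ambient_convex :: "geom \<Rightarrow> 'a::euclidean_space set \<Rightarrow> bool" where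
  "ambient_convex k G \<longleftrightarrow> closed G \<and> convex G \<and> (k \<noteq> Euc \<longrightarrow> cone G)"

definition ambient_hull :: "geom \<Rightarrow> 'a::euclidean_space set \<Rightarrow> 'a set" where
  "ambient_hull k T = \<Inter>{G. ambient_convex k G \<and> T \<subseteq> G}"

lemma ambient_convex_Inter:
  "(\<And>G. G \<in> \<G> \<Longrightarrow> ambient_convex k G) \<Longrightarrow> ambient_convex k (\<Inter>\<G>)"
  unfolding ambient_convex_def by (auto intro: closed_Inter convex_Inter cone_Inter)

lemma ambient_convex_ambient_hull: "ambient_convex k (ambient_hull k T)"
  unfolding ambient_hull_def by (rule ambient_convex_Inter) simp

lemma closed_ambient_hull: "closed (ambient_hull k T)"
  using ambient_convex_ambient_hull[of k T] unfolding ambient_convex_def by blast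

lemma convex_ambient_hull: "convex (ambient_hull k T)"
  using ambient_convex_ambient_hull[of k T] unfolding ambient_convex_def by blast

lemma subset_ambient_hull: "T \<subseteq> ambient_hull k T"
  unfolding ambient_hull_def by blast

lemma ambient_hull_minimal: "ambient_convex k G \<Longrightarrow> T \<subseteq> G \<Longrightarrow> ambient_hull k T \<subseteq> G"
  unfolding ambient_hull_def by blast

lemma ambient_hull_mono: "T \<subseteq> S \<Longrightarrow> ambient_hull k T \<subseteq> ambient_hull k S"
  unfolding ambient_hull_def by blast

lemma space_Int_ambient_hull_eq:
  assumes "ambient_convex k G" "T = space k \<inter> G"
  shows "space k \<inter> ambient_hull k T = T"
  using ambient_hull_minimal[OF assms(1)] subset_ambient_hull[of T k] assms(2) by blast

lemma ambient_convex_halfspace_ge: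
  "k \<noteq> Euc \<longrightarrow> b = 0 \<Longrightarrow> ambient_convex k {z. a \<bullet> z \<ge> b}"
  by (auto simp: ambient_convex_def closed_halfspace_ge convex_halfspace_ge cone_def)

lemma cone_scaleR_mem_iff:
  assumes "cone S" "c > 0"
  shows "c *\<^sub>R z \<in> S \<longleftrightarrow> z \<in> S"
  using mem_cone[OF assms(1), of "c *\<^sub>R z" "1 / c"] mem_cone[OF assms(1), of z c] assms(2)
  by auto

lemma ambient_convex_scaleR_iff:
  assumes "ambient_convex k G" "w \<in> model_cone k"
  shows "radial_factor k w *\<^sub>R z \<in> G \<longleftrightarrow> z \<in> G"
proof (cases "k = Euc")
  case False
  then have "cone G" using assms(1) by (simp add: ambient_convex_def)
  moreover have "radial_factor k w > 0" using radial_factor_pos[OF assms(2)] .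
  ultimately show ?thesis by (rule cone_scaleR_mem_iff)
qed (simp add: radial_factor_def)

lemma radial_proj_mem_iff:
  "ambient_convex k G \<Longrightarrow> w \<in> model_cone k \<Longrightarrow> radial_proj k w \<in> G \<longleftrightarrow> w \<in> G"
  unfolding radial_proj_def by (rule ambient_convex_scaleR_iff)

lemma hyperplanes_eq:
  fixes H :: "'a::euclidean_space set"
  assumes "H \<in> hyperplanes k"
  obtains a b where "a \<noteq> 0" "k \<noteq> Euc \<longrightarrow> b = 0" "H = space k \<inter> {z. a \<bullet> z = b}"
proof -
  obtain A where A: "H = space k \<inter> A" "ambient_flat k A" "aff_dim A = int DIM('a) - 1"
    using assms unfolding hyperplanes_def by blast
  have "affine A"
    using A(2) by (auto simp: ambient_flat_def subspace_imp_affine split: if_splits)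
  moreover have "aff_dim A = int (DIM('a) - 1)"
    using A(3) DIM_positive[where 'a='a] by (simp add: of_nat_diff)
  ultimately obtain a b where ab: "a \<noteq> 0" "A = {x. a \<bullet> x = b}"
    unfolding aff_dim_eq_hyperplane by (metis affine_hull_eq)
  have "b = 0" if "k \<noteq> Euc"
  proof -
    have "0 \<in> A" using A(2) that by (simp add: ambient_flat_def subspace_0)
    then show ?thesis using ab(2) by simp
  qed
  then show ?thesis using that ab A(1) by blast
qed

lemma space_Int_halfspace_gt_eq_image:
  fixes a :: "'a::euclidean_space"
  assumes "k \<noteq> Euc \<longrightarrow> b = 0"
  shows "space k \<inter> {z. a \<bullet> z > b} = radial_proj k ` (model_cone k \<inter> {w. a \<bullet> w > b})"
proof
  show "space k \<inter> {z. a \<bullet> z > b} \<subseteq> radial_proj k ` (model_cone k \<inter> {w. a \<bullet> w > b})"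
    using radial_proj_space space_subset_model_cone by (fastforce intro: rev_image_eqI)
  have "a \<bullet> radial_proj k w > b" if "w \<in> model_cone k" "a \<bullet> w > b" for w
    using that radial_factor_pos[OF that(1)] assms
    by (cases "k = Euc") (auto simp: radial_proj_def radial_factor_def)
  then show "radial_proj k ` (model_cone k \<inter> {w. a \<bullet> w > b}) \<subseteq> space k \<inter> {z. a \<bullet> z > b}"
    using radial_proj_in_space by blast
qed

lemma convex_model_cone_Int_halfspace_gt:
  assumes "k \<noteq> Euc \<longrightarrow> b = 0"
  shows "convex (model_cone k \<inter> {w::'a::euclidean_space. a \<bullet> w > b})"
proof (cases k)
  case Sph
  then have "model_cone k \<inter> {w::'a. a \<bullet> w > b} = {w. a \<bullet> w > b}"
    using assms by (auto simp: model_cone_def)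
  then show ?thesis by (simp add: convex_halfspace_gt)
qed (simp_all add: model_cone_def convex_Int convex_future_cone convex_halfspace_gt)

lemma connected_space_Int_halfspace_gt:
  fixes a :: "'a::euclidean_space"
  assumes "k \<noteq> Euc \<longrightarrow> b = 0"
  shows "connected (space k \<inter> {z. a \<bullet> z > b})"
  unfolding space_Int_halfspace_gt_eq_image[OF assms]
  by (intro connected_continuous_image continuous_on_subset[OF continuous_on_radial_proj]
      convex_connected convex_model_cone_Int_halfspace_gt assms) auto

lemma components_space_Diff_hyperplane:
  fixes a :: "'a::euclidean_space"
  assumes "k \<noteq> Euc \<longrightarrow> b = 0" and S: "S \<in> components (space k - {z. a \<bullet> z = b})"
  shows "S = space k \<inter> {z. a \<bullet> z > b} \<or> S = space k \<inter> {z. a \<bullet> z < b}"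
proof -
  have max: "P = S" if "connected P" "S \<subseteq> P" "P \<subseteq> space k - {z. a \<bullet> z = b}" for P
    using S that in_components_nonempty[OF S] unfolding in_components_maximal by blast
  have "connected (space k \<inter> {z. (- a) \<bullet> z > - b})"
    by (rule connected_space_Int_halfspace_gt) (use assms(1) in simp)
  then have conn_lt: "connected (space k \<inter> {z. a \<bullet> z < b})" by simp
  have conn_gt: "connected (space k \<inter> {z. a \<bullet> z > b})"
    by (rule connected_space_Int_halfspace_gt) (use assms(1) in simp)
  have sub: "S \<subseteq> space k" "\<forall>z\<in>S. a \<bullet> z > b \<or> a \<bullet> z < b"
    using in_components_subset[OF S] by (auto simp: neq_iff)
  have "{z. a \<bullet> z > b} \<inter> S = {} \<or> {z. a \<bullet> z < b} \<inter> S = {}"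
    by (rule connectedD[OF in_components_connected[OF S] open_halfspace_gt open_halfspace_lt])
      (use sub in auto)
  then show ?thesis
  proof
    assume "{z. a \<bullet> z < b} \<inter> S = {}"
    then have "S \<subseteq> space k \<inter> {z. a \<bullet> z > b}" using sub by blast
    then show ?thesis using max[OF conn_gt] by auto
  next
    assume "{z. a \<bullet> z > b} \<inter> S = {}"
    then have "S \<subseteq> space k \<inter> {z. a \<bullet> z < b}" using sub by blast
    then show ?thesis using max[OF conn_lt] by auto
  qed
qed

lemma space_Int_closure_halfspace_gt:
  fixes a :: "'a::euclidean_space"
  assumes "a \<noteq> 0" "k \<noteq> Euc \<longrightarrow> b = 0"
  shows "space k \<inter> closure (space k \<inter> {z. a \<bullet> z > b}) = space k \<inter> {z. a \<bullet> z \<ge> b}"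
proof
  have "closure (space k \<inter> {z. a \<bullet> z > b}) \<subseteq> {z. a \<bullet> z \<ge> b}"
    by (rule closure_minimal) (auto simp: closed_halfspace_ge)
  then show "space k \<inter> closure (space k \<inter> {z. a \<bullet> z > b}) \<subseteq> space k \<inter> {z. a \<bullet> z \<ge> b}"
    by blast
  show "space k \<inter> {z. a \<bullet> z \<ge> b} \<subseteq> space k \<inter> closure (space k \<inter> {z. a \<bullet> z > b})"
  proof clarify
    fix z assume z: "z \<in> space k" "a \<bullet> z \<ge> b"
    have "\<exists>y\<in>space k \<inter> {z. a \<bullet> z > b}. dist y z < e" if "e > 0" for e
    proof -
      obtain d where d: "d > 0" "ball z d \<subseteq> model_cone k" "radial_proj k ` ball z d \<subseteq> ball z e"
        using radial_proj_near[OF z(1) \<open>e > 0\<close>] .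
      define w where "w = z + (d / (2 * norm a)) *\<^sub>R a"
      have w: "w \<in> ball z d" using d assms(1) by (simp add: w_def dist_norm)
      have "a \<bullet> w > b"
      proof -
        have "0 < d * (a \<bullet> a) / (2 * norm a)" using d assms(1) by simp
        then show ?thesis using z by (simp add: w_def inner_add_right)
      qed
      then have "radial_proj k w \<in> space k \<inter> {z. a \<bullet> z > b}"
        using w d(2) space_Int_halfspace_gt_eq_image[OF assms(2)] by blast
      moreover have "dist (radial_proj k w) z < e"
        using w d(3) by (metis dist_commute image_subset_iff mem_ball)
      ultimately show ?thesis by blast
    qed
    then show "z \<in> closure (space k \<inter> {z. a \<bullet> z > b})"
      unfolding closure_approachable by blast
  qed
qed

lemma halfspacesE:
  fixes H :: "'a::euclidean_space set"
  assumes "H \<in> hyperplanes k" "S \<in> halfspaces k H"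
  obtains a b where "a \<noteq> 0" "k \<noteq> Euc \<longrightarrow> b = 0" "S = space k \<inter> {z. a \<bullet> z \<ge> b}"
proof -
  obtain a b where ab: "a \<noteq> 0" "k \<noteq> Euc \<longrightarrow> b = 0" "H = space k \<inter> {z. a \<bullet> z = b}"
    using hyperplanes_eq[OF assms(1)] .
  have "space k - H = space k - {z. a \<bullet> z = b}" using ab(3) by blast
  then obtain S0 where S0: "S = space k \<inter> closure S0" "S0 \<in> components (space k - {z. a \<bullet> z = b})"
    using assms(2) unfolding halfspaces_def by force
  from components_space_Diff_hyperplane[OF ab(2) S0(2)] show ?thesis
  proof
    assume "S0 = space k \<inter> {z. a \<bullet> z > b}"
    then have "S = space k \<inter> {z. a \<bullet> z \<ge> b}"
      using S0(1) space_Int_closure_halfspace_gt[OF ab(1,2)] by simp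
    then show ?thesis using that ab by blast
  next
    assume "S0 = space k \<inter> {z. a \<bullet> z < b}"
    then have "S0 = space k \<inter> {z. (- a) \<bullet> z > - b}" by simp
    then have "S = space k \<inter> {z. (- a) \<bullet> z \<ge> - b}"
      using S0(1) space_Int_closure_halfspace_gt[of "- a" k "- b"] ab(1,2) by simp
    then show ?thesis using that[of "- a" "- b"] ab by simp
  qed
qed

lemma polyhedron_space_Int_ambient_hull:
  fixes T :: "'a::euclidean_space set"
  assumes "polyhedron k T"
  shows "space k \<inter> ambient_hull k T = T"
proof -
  obtain \<H> F where HF: "\<H> \<subseteq> hyperplanes k" "\<forall>S\<in>F. \<exists>H\<in>\<H>. S \<in> halfspaces k H"
    "T = space k \<inter> \<Inter>F"
    using assms unfolding polyhedron_def by blast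
  have "space k \<inter> ambient_hull k S = S" if "S \<in> F" for S
  proof -
    obtain H where "H \<in> hyperplanes k" "S \<in> halfspaces k H" using HF(1,2) \<open>S \<in> F\<close> by blast
    then obtain a b where "k \<noteq> Euc \<longrightarrow> b = 0" "S = space k \<inter> {z. a \<bullet> z \<ge> b}"
      by (rule halfspacesE)
    then show ?thesis using space_Int_ambient_hull_eq ambient_convex_halfspace_ge by blast
  qed
  moreover have "ambient_hull k T \<subseteq> ambient_hull k S" if "S \<in> F" for S
    using that HF(3) by (intro ambient_hull_mono) blast
  ultimately have "space k \<inter> ambient_hull k T \<subseteq> T" using HF(3) by blast
  then show ?thesis using subset_ambient_hull HF(3) by blast
qed

lemma int_X_space_Int_subset_interior:
  assumes "ambient_convex k G"
  shows "int_X k (space k \<inter> G) \<subseteq> interior G"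
proof
  fix z assume "z \<in> int_X k (space k \<inter> G)"
  then obtain r where r: "z \<in> space k" "r > 0" "ball z r \<inter> space k \<subseteq> space k \<inter> G"
    unfolding int_X_def by blast
  obtain d where d: "d > 0" "ball z d \<subseteq> model_cone k" "radial_proj k ` ball z d \<subseteq> ball z r"
    using radial_proj_near[OF r(1,2)] .
  have "ball z d \<subseteq> G"
  proof
    fix w assume w: "w \<in> ball z d"
    then have "radial_proj k w \<in> ball z r \<inter> space k" using d radial_proj_in_space by blast
    then show "w \<in> G" using r(3) radial_proj_mem_iff[OF assms] w d(2) by blast
  qed
  then show "z \<in> interior G" using d(1) mem_interior by blast
qed

lemma radial_proj_in_int_X:
  assumes G: "ambient_convex k G" and U: "open U" "U \<subseteq> model_cone k \<inter> G" "u \<in> U"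
  shows "radial_proj k u \<in> int_X k (space k \<inter> G)"
proof -
  define c where "c = radial_factor k u"
  have u: "u \<in> model_cone k" using U by blast
  have c: "c > 0" using radial_factor_pos[OF u] by (simp add: c_def)
  have "open ((\<lambda>q. (1 / c) *\<^sub>R q) -` U)"
    by (intro continuous_open_vimage U(1) continuous_intros)
  moreover have "radial_proj k u \<in> (\<lambda>q. (1 / c) *\<^sub>R q) -` U"
    using c U(3) by (simp add: radial_proj_def c_def)
  ultimately obtain r where r: "r > 0" "ball (radial_proj k u) r \<subseteq> (\<lambda>q. (1 / c) *\<^sub>R q) -` U"
    by (meson open_contains_ball)
  have "q \<in> G" if "(1 / c) *\<^sub>R q \<in> U" for q
  proof -
    have "c *\<^sub>R ((1 / c) *\<^sub>R q) \<in> G"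
      using that U(2) ambient_convex_scaleR_iff[OF G u, of "(1 / c) *\<^sub>R q"] unfolding c_def by blast
    then show ?thesis using c by simp
  qed
  moreover have "radial_proj k u \<in> space k \<inter> G"
    using radial_proj_in_space[OF u] radial_proj_mem_iff[OF G u] U by blast
  ultimately show ?thesis unfolding int_X_def using r by blast
qed

definition flat_hull :: "geom \<Rightarrow> 'a::euclidean_space set \<Rightarrow> 'a set" where
  "flat_hull k C = (if k = Euc then affine hull C else span C)"

lemma plane_hull_eq_space_Int_flat_hull:
  fixes C :: "'a::euclidean_space set"
  assumes "C \<noteq> {}" "C \<subseteq> space k"
  shows "plane_hull k C = space k \<inter> flat_hull k C"
proof
  have C: "C \<subseteq> flat_hull k C" by (auto simp: flat_hull_def hull_subset span_superset)
  have "ambient_flat k (flat_hull k C)"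
    by (auto simp: ambient_flat_def flat_hull_def affine_affine_hull)
  then have "space k \<inter> flat_hull k C \<in> planes k"
    unfolding planes_def using assms C by blast
  then show "plane_hull k C \<subseteq> space k \<inter> flat_hull k C"
    unfolding plane_hull_def using assms(2) C by blast
  have "space k \<inter> flat_hull k C \<subseteq> P" if P: "P \<in> planes k" and CP: "C \<subseteq> P" for P
  proof -
    obtain A where A: "P = space k \<inter> A" "ambient_flat k A"
      using P unfolding planes_def by blast
    then have "flat_hull k C \<subseteq> A"
      using CP by (auto simp: ambient_flat_def flat_hull_def hull_minimal span_minimal)
    then show ?thesis using A(1) by blast
  qed
  then show "space k \<inter> flat_hull k C \<subseteq> plane_hull k C"
    unfolding plane_hull_def by blast
qed

lemma flat_hull_subset_affine_hull:
  assumes "ambient_convex k D" "C \<subseteq> D" "D \<noteq> {}"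
  shows "flat_hull k C \<subseteq> affine hull D"
proof (cases "k = Euc")
  case False
  then have "0 \<in> D" using assms cone_contains_0 by (auto simp: ambient_convex_def)
  then have "affine hull D = span D" by (intro affine_hull_span_0 hull_inc)
  then show ?thesis using False assms(2) by (simp add: flat_hull_def span_mono)
qed (use assms(2) in \<open>simp add: flat_hull_def hull_mono\<close>)

lemma radial_proj_in_flat_hull:
  assumes "w \<in> affine hull C"
  shows "radial_proj k w \<in> flat_hull k C"
proof (cases "k = Euc")
  case False
  have "w \<in> span C" using assms affine_hull_subset_span by blast
  then show ?thesis using False by (simp add: radial_proj_def flat_hull_def span_mul)
qed (use assms in \<open>simp add: radial_proj_def radial_factor_def flat_hull_def\<close>)

lemma in_open_segment_reflect:
  fixes y :: "'a::real_vector"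
  assumes "y \<noteq> p" "t > 0"
  shows "y \<in> open_segment (y - t *\<^sub>R (p - y)) p"
proof -
  have "y - t *\<^sub>R (p - y) \<noteq> p"
  proof
    assume "y - t *\<^sub>R (p - y) = p"
    then have "(1 + t) *\<^sub>R (y - p) = 0" by (simp add: algebra_simps)
    then show False using assms by simp
  qed
  moreover have "y = (1 - t / (1 + t)) *\<^sub>R (y - t *\<^sub>R (p - y)) + (t / (1 + t)) *\<^sub>R p"
    using assms(2) by (simp add: field_simps algebra_simps flip: scaleR_add_left)
  ultimately show ?thesis
    unfolding in_segment using assms(2) by (intro conjI exI[of _ "t / (1 + t)"]) auto
qed

lemma dist_diff_scaleR_less:
  assumes "0 < t" "t \<le> r / (norm v + 1)"
  shows "dist y (y - t *\<^sub>R v) < r"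
proof -
  have "t * norm v < t * (norm v + 1)" using assms(1) by simp
  also have "\<dots> \<le> r"
    using assms(2) pos_le_divide_eq[of "norm v + 1" t r] by (simp add: add_nonneg_pos)
  finally show ?thesis using assms(1) by (simp add: dist_norm)
qed

lemma finite_closed_cover_open_piece:
  fixes g :: "'b \<Rightarrow> 'a::topological_space set"
  assumes "finite J" "open U" "U \<noteq> {}" "U \<subseteq> \<Union>(g ` J)" "\<And>j. j \<in> J \<Longrightarrow> closed (g j)"
  shows "\<exists>j\<in>J. \<exists>V. open V \<and> V \<noteq> {} \<and> V \<subseteq> U \<inter> g j"
  using assms
proof (induction J arbitrary: U rule: finite_induct)
  case (insert j J)
  show ?case
  proof (cases "U \<subseteq> g j")
    case False
    then have "open (U - g j)" "U - g j \<noteq> {}" "U - g j \<subseteq> \<Union>(g ` J)"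
      using insert.prems by auto
    then show ?thesis using insert.IH[of "U - g j"] insert.prems(4) by blast
  qed (use insert.prems in blast)
qed simp

text \<open>Write y = (1 - u) q + u p. The piece is the image of a small ball V in the interior of
  G near y under the homothety with centre y and ratio u. It is also the image of V + (p - y),
  which lies in the cover near p, under the homothety with centre q and ratio u, and the
  latter maps each g j into itself.\<close>

lemma convex_open_piece_near:
  fixes G :: "'a::euclidean_space set"
  assumes G: "convex G" "interior G \<noteq> {}" "y \<in> G" and y: "y \<in> open_segment q p"
    and J: "finite J" "\<And>j. j \<in> J \<Longrightarrow> convex (g j) \<and> closed (g j) \<and> q \<in> g j"
    and p: "p \<in> interior (\<Union>(g ` J))" and "r > 0"
  shows "\<exists>j\<in>J. \<exists>U. open U \<and> U \<noteq> {} \<and> U \<subseteq> G \<inter> g j \<inter> ball y r"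
proof -
  obtain \<rho> where \<rho>: "\<rho> > 0" "ball p \<rho> \<subseteq> \<Union>(g ` J)"
    using p mem_interior by blast
  obtain u where u: "0 < u" "u < 1" "y = (1 - u) *\<^sub>R q + u *\<^sub>R p"
    using y by (auto simp: in_segment)
  define V where "V = interior G \<inter> ball y (min \<rho> r)"
  have "y \<in> closure (interior G)"
    using convex_closure_interior[OF G(1,2)] G(3) closure_subset by blast
  moreover have "min \<rho> r > 0" using \<rho>(1) \<open>r > 0\<close> by simp
  ultimately obtain z where "z \<in> interior G" "dist z y < min \<rho> r"
    unfolding closure_approachable by blast
  then have "V \<noteq> {}" unfolding V_def by (auto simp: dist_commute)
  define B where "B = (\<lambda>w. (1 - u) *\<^sub>R y + u *\<^sub>R w) ` V"
  have "open B" unfolding B_def V_def using u by (intro open_affinity) auto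
  moreover have "B \<noteq> {}" using \<open>V \<noteq> {}\<close> by (simp add: B_def)
  moreover have "B \<subseteq> G \<inter> ball y r \<inter> \<Union>(g ` J)"
  proof
    fix v assume "v \<in> B"
    then obtain w where w: "w \<in> interior G" "dist y w < min \<rho> r"
      and v: "v = (1 - u) *\<^sub>R y + u *\<^sub>R w"
      unfolding B_def V_def by auto
    have "v \<in> G"
      unfolding v using u G(3) interior_subset w(1) by (intro convexD[OF G(1)]) auto
    moreover have "dist y v = u * dist y w"
      using u by (simp add: v dist_norm algebra_simps flip: scaleR_diff_right)
    then have "v \<in> ball y r" using u w(2) mult_left_le_one_le[of "dist y w" u] by simp
    moreover obtain j where j: "j \<in> J" "w + (p - y) \<in> g j"
      using w(2) \<rho>(2) by (force simp: dist_norm norm_minus_commute algebra_simps)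
    have "v = (1 - u) *\<^sub>R q + u *\<^sub>R (w + (p - y))" by (simp add: v u(3) algebra_simps)
    then have "v \<in> g j" using J(2)[OF j(1)] j(2) u by (auto intro: convexD)
    ultimately show "v \<in> G \<inter> ball y r \<inter> \<Union>(g ` J)" using j(1) by blast
  qed
  ultimately obtain j U where "j \<in> J" "open U" "U \<noteq> {}" "U \<subseteq> B \<inter> g j"
    using finite_closed_cover_open_piece[OF J(1), of B g] J(2) by blast
  then show ?thesis using \<open>B \<subseteq> _\<close> by blast
qed

locale locally_finite_tessellation =
  fixes k :: geom and \<T> :: "'a::euclidean_space set set"
  assumes locally_finite: "locally_finite_tess k \<T>"
begin

lemma tessellation: "tessellation k \<T>"
  using locally_finite by (simp add: locally_finite_tess_def)

lemma finite_tiles_meeting: "compact K \<Longrightarrow> K \<subseteq> space k \<Longrightarrow> finite {T \<in> \<T>. T \<inter> K \<noteq> {}}"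
  using locally_finite by (simp add: locally_finite_tess_def)

lemma Union_tiles: "\<Union>\<T> = space k"
  using tessellation by (simp add: tessellation_def)

lemma tile_space_Int_ambient_hull: "T \<in> \<T> \<Longrightarrow> space k \<inter> ambient_hull k T = T"
  using tessellation polyhedron_space_Int_ambient_hull by (auto simp: tessellation_def)

lemma closed_tile: "T \<in> \<T> \<Longrightarrow> closed T"
  using tile_space_Int_ambient_hull[of T] closed_space closed_ambient_hull by (metis closed_Int)

lemma interior_ambient_hull_tile: "T \<in> \<T> \<Longrightarrow> interior (ambient_hull k T) \<noteq> {}"
  using tessellation tile_space_Int_ambient_hull[of T]
    int_X_space_Int_subset_interior[OF ambient_convex_ambient_hull, of k T]
  by (auto simp: tessellation_def thick_def)

lemma ambient_hulls_no_common_open: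
  assumes "T1 \<in> \<T>" "T2 \<in> \<T>" "T1 \<noteq> T2" "open U"
    and U: "U \<subseteq> model_cone k \<inter> ambient_hull k T1 \<inter> ambient_hull k T2"
  shows "U = {}"
proof -
  have "radial_proj k u \<in> int_X k T1 \<inter> int_X k T2" if "u \<in> U" for u
    using radial_proj_in_int_X[OF ambient_convex_ambient_hull \<open>open U\<close> _ that] U
      tile_space_Int_ambient_hull[OF assms(1)] tile_space_Int_ambient_hull[OF assms(2)]
    by (metis Int_subset_iff IntI)
  moreover have "int_X k T1 \<inter> int_X k T2 = {}"
    using tessellation assms(1-3) by (simp add: tessellation_def)
  ultimately show ?thesis by blast
qed

text \<open>Otherwise \<open>convex_open_piece_near\<close> yields a nonempty open set inside the lifts of
  two distinct tiles.\<close>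

lemma no_hull_between_common_point_and_cover:
  assumes T: "T \<in> \<T>" and J: "finite J" "J \<subseteq> \<T> - {T}"
    and y: "y \<in> model_cone k" "y \<in> ambient_hull k T" "y \<in> open_segment q p"
    and q: "\<And>j. j \<in> J \<Longrightarrow> q \<in> ambient_hull k j"
    and p: "p \<in> interior (\<Union>(ambient_hull k ` J))"
  shows False
proof -
  obtain r where r: "r > 0" "ball y r \<subseteq> model_cone k"
    using open_model_cone y(1) open_contains_ball by blast
  have "convex (ambient_hull k j) \<and> closed (ambient_hull k j) \<and> q \<in> ambient_hull k j"
    if "j \<in> J" for j
    using q[OF that] by (simp add: convex_ambient_hull closed_ambient_hull)
  then have "\<exists>j\<in>J. \<exists>U. open U \<and> U \<noteq> {} \<and> U \<subseteq> ambient_hull k T \<inter> ambient_hull k j \<inter> ball y r"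
    using convex_open_piece_near[OF convex_ambient_hull interior_ambient_hull_tile[OF T] y(2,3) J(1)
        _ p r(1)]
    by blast
  then obtain j U where "j \<in> J" "open U" "U \<noteq> {}"
    "U \<subseteq> model_cone k \<inter> ambient_hull k T \<inter> ambient_hull k j"
    using r(2) by blast
  then show False using ambient_hulls_no_common_open[of T j U] T J(2) by blast
qed

end

locale tessellation_point = locally_finite_tessellation k \<T>
  for k and \<T> :: "'a::euclidean_space set set" +
  fixes x :: 'a
  assumes x_in_space: "x \<in> space k"
begin

definition tiles_at :: "'a set set" where
  "tiles_at = {T \<in> \<T>. x \<in> T}"

definition lifted_cell :: "'a set" where
  "lifted_cell = \<Inter>(ambient_hull k ` tiles_at)"

lemma tiles_at_subset: "tiles_at \<subseteq> \<T>"
  by (auto simp: tiles_at_def)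

lemma finite_tiles_at: "finite tiles_at"
proof -
  have "tiles_at = {T \<in> \<T>. T \<inter> {x} \<noteq> {}}" by (auto simp: tiles_at_def)
  then show ?thesis using finite_tiles_meeting[of "{x}"] x_in_space by simp
qed

lemma tiles_at_nonempty: "tiles_at \<noteq> {}"
  using Union_tiles x_in_space by (auto simp: tiles_at_def)

lemma Inter_tiles_at_eq: "\<Inter>tiles_at = space k \<inter> lifted_cell"
proof -
  have "\<Inter>tiles_at = \<Inter>((\<lambda>T. space k \<inter> ambient_hull k T) ` tiles_at)"
    using tile_space_Int_ambient_hull tiles_at_subset by (auto intro!: arg_cong[where f = Inter])
  also have "\<dots> = space k \<inter> lifted_cell"
    using tiles_at_nonempty by (auto simp: lifted_cell_def)
  finally show ?thesis .
qed

lemma x_in_lifted_cell: "x \<in> lifted_cell"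
  using subset_ambient_hull by (fastforce simp: lifted_cell_def tiles_at_def)

lemma ambient_convex_lifted_cell: "ambient_convex k lifted_cell"
  unfolding lifted_cell_def by (auto intro: ambient_convex_Inter ambient_convex_ambient_hull)

text \<open>Local finiteness enters here: the tiles meeting a compact neighbourhood of x but
  missing x form a closed set at positive distance from x.\<close>

lemma tiles_at_cover_near: "\<exists>e>0. ball x e \<inter> space k \<subseteq> \<Union>tiles_at"
proof -
  define K where "K = cball x 1 \<inter> space k"
  define \<F> where "\<F> = {T \<in> \<T>. T \<inter> K \<noteq> {} \<and> x \<notin> T}"
  have "compact K" unfolding K_def by (rule compact_Int_closed[OF compact_cball closed_space])
  then have "finite \<F>"
    using finite_tiles_meeting[of K] unfolding \<F>_def K_def by (auto elim: rev_finite_subset)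
  then have "closed (\<Union>\<F>)" using closed_tile by (intro closed_Union) (auto simp: \<F>_def)
  moreover have "x \<notin> \<Union>\<F>" by (auto simp: \<F>_def)
  ultimately obtain e where e: "e > 0" "ball x e \<subseteq> - \<Union>\<F>"
    by (metis open_Compl open_contains_ball ComplI)
  have "ball x (min e 1) \<inter> space k \<subseteq> \<Union>tiles_at"
  proof
    fix z assume z: "z \<in> ball x (min e 1) \<inter> space k"
    then obtain T where T: "T \<in> \<T>" "z \<in> T" using Union_tiles by blast
    have "z \<in> K" using z by (auto simp: K_def)
    have "x \<in> T"
    proof (rule ccontr)
      assume "x \<notin> T"
      then have "T \<in> \<F>" using T \<open>z \<in> K\<close> by (auto simp: \<F>_def)
      then show False using e(2) z T(2) by auto
    qed
    then show "z \<in> \<Union>tiles_at" using T by (auto simp: tiles_at_def)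
  qed
  then show ?thesis using e(1) by (intro exI[of _ "min e 1"]) auto
qed

lemma x_in_interior_Union_ambient_hulls: "x \<in> interior (\<Union>(ambient_hull k ` tiles_at))"
proof -
  obtain e where e: "e > 0" "ball x e \<inter> space k \<subseteq> \<Union>tiles_at"
    using tiles_at_cover_near by blast
  obtain d where d: "d > 0" "ball x d \<subseteq> model_cone k" "radial_proj k ` ball x d \<subseteq> ball x e"
    using radial_proj_near[OF x_in_space e(1)] .
  have "ball x d \<subseteq> \<Union>(ambient_hull k ` tiles_at)"
  proof
    fix w assume w: "w \<in> ball x d"
    then have "radial_proj k w \<in> ball x e \<inter> space k"
      using d radial_proj_in_space by blast
    then obtain T where T: "T \<in> tiles_at" "radial_proj k w \<in> T" using e(2) by blast
    then have "radial_proj k w \<in> ambient_hull k T" using subset_ambient_hull by blast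
    then have "w \<in> ambient_hull k T"
      using radial_proj_mem_iff[OF ambient_convex_ambient_hull] w d(2) by blast
    then show "w \<in> \<Union>(ambient_hull k ` tiles_at)" using T(1) by blast
  qed
  then show ?thesis using d(1) mem_interior by blast
qed

lemma eventually_ray_in_ambient_hull:
  assumes d: "d \<in> lifted_cell" and T: "T \<in> tiles_at"
  shows "eventually (\<lambda>t. x - t *\<^sub>R (d - x) \<in> ambient_hull k T) (at_right 0)"
proof (rule ccontr)
  assume not_eventually: "\<not> ?thesis"
  obtain e where e: "e > 0" "ball x e \<subseteq> \<Union>(ambient_hull k ` tiles_at)"
    using x_in_interior_Union_ambient_hulls mem_interior by blast
  have "e / (norm (d - x) + 1) > 0" using e(1) by (simp add: add_nonneg_pos)
  then obtain t where t: "0 < t" "t < e / (norm (d - x) + 1)"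
    and p: "x - t *\<^sub>R (d - x) \<notin> ambient_hull k T"
    using not_eventually unfolding eventually_at_right_field by blast
  define p where "p = x - t *\<^sub>R (d - x)"
  have xT: "x \<in> ambient_hull k T" using T subset_ambient_hull by (auto simp: tiles_at_def)
  then have "d \<noteq> x" using p by auto
  then have "x \<in> open_segment d p"
    using in_open_segment_reflect[of x d t] t(1) by (simp add: p_def open_segment_commute)
  have "ball x e - ambient_hull k T \<subseteq> \<Union>(ambient_hull k ` (tiles_at - {T}))" using e(2) by blast
  moreover have "open (ball x e - ambient_hull k T)"
    by (intro open_Diff open_ball closed_ambient_hull)
  moreover have "p \<in> ball x e - ambient_hull k T"
    using dist_diff_scaleR_less[of t e "d - x" x] t p by (simp add: p_def less_imp_le)
  ultimately have "p \<in> interior (\<Union>(ambient_hull k ` (tiles_at - {T})))"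
    by (meson interior_maximal interior_open subsetD)
  moreover have "x \<in> model_cone k" using x_in_space space_subset_model_cone by blast
  ultimately show False
    using no_hull_between_common_point_and_cover[of T "tiles_at - {T}" x d p] T d xT
      \<open>x \<in> open_segment d p\<close> finite_tiles_at tiles_at_subset
    by (auto simp: lifted_cell_def)
qed

lemma x_in_rel_interior_lifted_cell: "x \<in> rel_interior lifted_cell"
proof -
  have "\<exists>e>1. (1 - e) *\<^sub>R d + e *\<^sub>R x \<in> lifted_cell" if d: "d \<in> lifted_cell" for d
  proof -
    have "\<forall>T\<in>tiles_at. eventually (\<lambda>t. x - t *\<^sub>R (d - x) \<in> ambient_hull k T) (at_right 0)"
      using eventually_ray_in_ambient_hull[OF d] by blast
    then have "eventually (\<lambda>t. \<forall>T\<in>tiles_at. x - t *\<^sub>R (d - x) \<in> ambient_hull k T) (at_right 0)"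
      by (rule eventually_ball_finite[OF finite_tiles_at])
    then have "eventually (\<lambda>t. t > 0 \<and> (\<forall>T\<in>tiles_at. x - t *\<^sub>R (d - x) \<in> ambient_hull k T))
        (at_right 0)"
      by (intro eventually_conj eventually_at_right_less)
    then have "\<exists>t. t > 0 \<and> (\<forall>T\<in>tiles_at. x - t *\<^sub>R (d - x) \<in> ambient_hull k T)"
      by (rule eventually_happens'[OF trivial_limit_at_right_real])
    then obtain t where t: "t > 0" "x - t *\<^sub>R (d - x) \<in> lifted_cell"
      by (auto simp: lifted_cell_def)
    have "(1 - (1 + t)) *\<^sub>R d + (1 + t) *\<^sub>R x = x - t *\<^sub>R (d - x)"
      by (simp add: algebra_simps)
    then show ?thesis using t by (intro exI[of _ "1 + t"]) auto
  qed
  moreover have "convex lifted_cell" unfolding lifted_cell_def by (rule convex_Inter) (auto simp: convex_ambient_hull)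
  ultimately show ?thesis using convex_rel_interior_iff x_in_lifted_cell by blast
qed

lemma plane_hull_cell: "plane_hull k (\<Inter>tiles_at) = space k \<inter> flat_hull k (\<Inter>tiles_at)"
  using x_in_space x_in_lifted_cell Inter_tiles_at_eq
  by (intro plane_hull_eq_space_Int_flat_hull) auto

lemma x_in_rel_int_cell: "x \<in> rel_int k (\<Inter>tiles_at)"
proof -
  obtain e where e: "e > 0" "ball x e \<inter> affine hull lifted_cell \<subseteq> lifted_cell"
    using x_in_rel_interior_lifted_cell mem_rel_interior_ball by blast
  have "flat_hull k (\<Inter>tiles_at) \<subseteq> affine hull lifted_cell"
    using ambient_convex_lifted_cell Inter_tiles_at_eq x_in_lifted_cell
    by (intro flat_hull_subset_affine_hull) auto
  then have "ball x e \<inter> plane_hull k (\<Inter>tiles_at) \<subseteq> \<Inter>tiles_at"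
    using e(2) plane_hull_cell Inter_tiles_at_eq by blast
  moreover have "x \<in> \<Inter>tiles_at" by (auto simp: tiles_at_def)
  ultimately show ?thesis using e(1) by (auto simp: rel_int_def)
qed

lemma rel_int_cell_Int_tile:
  assumes T: "T \<in> \<T>" "x \<notin> T"
  shows "rel_int k (\<Inter>tiles_at) \<inter> T = {}"
proof (rule ccontr)
  assume "rel_int k (\<Inter>tiles_at) \<inter> T \<noteq> {}"
  then obtain y e where y: "y \<in> \<Inter>tiles_at" "y \<in> T" "e > 0"
    and e: "ball y e \<inter> plane_hull k (\<Inter>tiles_at) \<subseteq> \<Inter>tiles_at"
    unfolding rel_int_def by blast
  have ys: "y \<in> space k" using y(1) Inter_tiles_at_eq by blast
  obtain \<delta> where \<delta>: "\<delta> > 0" "ball y \<delta> \<subseteq> model_cone k" "radial_proj k ` ball y \<delta> \<subseteq> ball y e"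
    using radial_proj_near[OF ys y(3)] .
  define s where "s = \<delta> / (norm (x - y) + 1)"
  have s: "s > 0" using \<delta>(1) by (simp add: s_def add_nonneg_pos)
  define q where "q = y - s *\<^sub>R (x - y)"
  have q: "q \<in> ball y \<delta>" using dist_diff_scaleR_less[of s \<delta> "x - y" y] s by (simp add: q_def s_def)
  have "q = (1 + s) *\<^sub>R y + (- s) *\<^sub>R x" by (simp add: q_def algebra_simps)
  also have "\<dots> \<in> affine hull (\<Inter>tiles_at)"
    by (rule mem_affine[OF affine_affine_hull hull_inc[OF y(1)] hull_inc]) (auto simp: tiles_at_def)
  finally have "radial_proj k q \<in> ball y e \<inter> plane_hull k (\<Inter>tiles_at)"
    using q \<delta> radial_proj_in_flat_hull radial_proj_in_space plane_hull_cell by blast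
  then have "radial_proj k q \<in> ambient_hull k j" if "j \<in> tiles_at" for j
    using e that subset_ambient_hull by blast
  then have q_hulls: "q \<in> ambient_hull k j" if "j \<in> tiles_at" for j
    using radial_proj_mem_iff[OF ambient_convex_ambient_hull] q \<delta>(2) that by blast
  have "y \<noteq> x" using T y(2) by blast
  then have "y \<in> open_segment q x" using in_open_segment_reflect s by (simp add: q_def)
  moreover have "tiles_at \<subseteq> \<T> - {T}" using T by (auto simp: tiles_at_def)
  moreover have "y \<in> model_cone k" using ys space_subset_model_cone by blast
  moreover have "y \<in> ambient_hull k T" using y(2) subset_ambient_hull by blast
  ultimately show False
    using no_hull_between_common_point_and_cover[OF T(1) finite_tiles_at _ _ _ _ q_hulls
        x_in_interior_Union_ambient_hulls]
    by blast
qed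

lemma cell_Inter_tiles_at: "cell k \<T> (\<Inter>tiles_at)"
  unfolding cell_def
proof (intro conjI ballI)
  show "\<Inter>tiles_at \<noteq> {}" by (auto simp: tiles_at_def)
  show "\<exists>\<S>. \<S> \<noteq> {} \<and> \<S> \<subseteq> \<T> \<and> \<Inter>tiles_at = \<Inter>\<S>"
    using tiles_at_nonempty tiles_at_subset by blast
  show "\<Inter>tiles_at \<subseteq> T \<or> rel_int k (\<Inter>tiles_at) \<inter> T = {}" if "T \<in> \<T>" for T
    using that rel_int_cell_Int_tile by (cases "x \<in> T") (auto simp: tiles_at_def)
qed

end

theorem lemma4p2:
  fixes k :: geom and \<T> :: "'a::euclidean_space set set" and x :: 'a
  assumes "locally_finite_tess k \<T>" and "x \<in> space k"
  shows "cell k \<T> (\<Inter>{T \<in> \<T>. x \<in> T}) \<and> x \<in> rel_int k (\<Inter>{T \<in> \<T>. x \<in> T})"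
proof -
  interpret tessellation_point k \<T> x
    using assms by unfold_locales
  show ?thesis
    using cell_Inter_tiles_at x_in_rel_int_cell by (simp add: tiles_at_def)
qed

end
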